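(* Let $q$ be a power of an odd prime, $k\ge2$, $0<r_1<r_2<\cdots<r_k<n$ integers, $a_1,\dots,a_k\in\mathbb{F}_{q^n}^*$ with the multiplicative order of $a_i$ dividing $q^{r_1}-1$ for all $i=2,\dots,k$, and $S(x)=\sum_{i=1}^k a_ix^{q^{r_i}}$. Then the following are equivalent: (1) $S(x)$ is a scattered polynomial of index $r_1$ over $\mathbb{F}_{q^n}$; (2) $S_{r_1}(x)=S(x)-a_1x^{q^{r_1}}=\sum_{i=2}^k a_ix^{q^{r_i}}$ is a scattered polynomial of index $r_1$ over $\mathbb{F}_{q^n}$; (3) $S^{r_1}_{r_1}(x)=\sum_{i=2}^k a_ix^{q^{r_i-r_1}}$ is a scattered polynomial of index $0$ over $\mathbb{F}_{q^n}$.
   Context: An $\mathbb{F}_q$-linearized polynomial $S\in\mathbb{F}_{q^n}[x]$ is a scattered polynomial of index $t$ over $\mathbb{F}_{q^n}$ if for all $y,z\in\mathbb{F}_{q^n}^*$, $\frac{S(y)}{y^{q^t}}=\frac{S(z)}{z^{q^t}}$ implies $y/z\in\mathbb{F}_q$. *)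

theory Defs
  imports Main "HOL-Computational_Algebra.Primes"
begin

definition subfield_Fq :: "nat \<Rightarrow> 'a::field set" where
  "subfield_Fq q = {x. x ^ q = x}"

definition mult_order :: "'a::field \<Rightarrow> nat" where
  "mult_order a = (LEAST d. 0 < d \<and> a ^ d = 1)"

text \<open>S is scattered of index t over F_(q^n) (ambient field is the type 'a):
  for all nonzero y, z, S(y)/y^(q^t) = S(z)/z^(q^t) implies y/z in F_q.\<close>
definition scattered :: "nat \<Rightarrow> nat \<Rightarrow> ('a::field \<Rightarrow> 'a) \<Rightarrow> bool" where
  "scattered q t S \<longleftrightarrow>
     (\<forall>y z. y \<noteq> 0 \<longrightarrow> z \<noteq> 0 \<longrightarrow> S y / y ^ (q ^ t) = S z / z ^ (q ^ t)
        \<longrightarrow> y / z \<in> subfield_Fq q)"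

end

theory Submission
  imports Defs "HOL-Number_Theory.Residues"
begin

text \<open>Put N = q^r1. Dropping the term a1 x^N shifts the quotient S(x)/x^N by the constant a1,
  so it does not change scatteredness of index r1. The order condition means a_i^N = a_i for
  i \<ge> 2; since x \<mapsto> x^N is additive, S_r1(x) = (S^r1_r1(x))^N, hence
  S_r1(x)/x^N = (S^r1_r1(x)/x)^N, and as x \<mapsto> x^N is also injective the two quotient
  conditions coincide.\<close>

lemma CHAR_eq_of_card_eq_prime_power:
  fixes p e :: nat
  assumes "prime p" "e \<ge> 1" "card (UNIV :: 'a::{finite,field} set) = p ^ e"
  shows "CHAR('a) = p"
proof -
  have prime_char: "prime CHAR('a)"
    using prime_CHAR_semidom[where 'a='a] finite_imp_CHAR_pos[where 'a='a] by simp
  have "CHAR('a) dvd p ^ e" using CHAR_dvd_CARD[where 'a='a] assms(3) by simp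
  hence "CHAR('a) dvd p" using prime_char prime_dvd_power by blast
  thus ?thesis using prime_char assms(1) primes_dvd_imp_eq by blast
qed

lemma power_CHAR_power_eq_iff:
  fixes u v :: "'a::field"
  assumes "prime CHAR('a)" "N = CHAR('a) ^ e"
  shows "u ^ N = v ^ N \<longleftrightarrow> u = v"
proof
  assume "u ^ N = v ^ N"
  moreover have "u ^ N = (u - v) ^ N + v ^ N"
    using freshmans_dream'[OF assms, of "u - v" v] by simp
  ultimately have "(u - v) ^ N = 0" by simp
  thus "u = v" by simp
qed simp

lemma power_mult_order:
  fixes a :: "'a::{finite,field}"
  assumes "a \<noteq> 0"
  shows "a ^ mult_order a = 1"
proof -
  have "\<not> inj (\<lambda>n::nat. a ^ n)"
  proof
    assume "inj (\<lambda>n::nat. a ^ n)"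
    hence "infinite (range (\<lambda>n::nat. a ^ n))"
      using finite_imageD infinite_UNIV_nat by blast
    thus False by simp
  qed
  then obtain i j :: nat where ij: "a ^ i = a ^ j" "i < j"
    unfolding inj_def by (metis linorder_neqE_nat)
  have "a ^ j = a ^ i * a ^ (j - i)"
    using ij(2) by (simp flip: power_add)
  hence "a ^ i * a ^ (j - i) = a ^ i * 1" using ij(1) by simp
  hence "a ^ (j - i) = 1" using assms by simp
  hence "\<exists>d. 0 < d \<and> a ^ d = 1" using ij(2) by (intro exI[of _ "j - i"]) auto
  then show ?thesis unfolding mult_order_def by (rule LeastI2_ex) auto
qed

lemma power_eq_self_if_mult_order_dvd:
  fixes a :: "'a::{finite,field}"
  assumes "a \<noteq> 0" "mult_order a dvd N - 1" "N \<ge> 1"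
  shows "a ^ N = a"
proof -
  obtain c where c: "N - 1 = mult_order a * c" using assms(2) by blast
  have "a ^ (N - 1) = 1" unfolding c power_mult power_mult_order[OF assms(1)] by simp
  moreover have "a ^ N = a * a ^ (N - 1)"
    using assms(3) by (simp flip: power_Suc)
  ultimately show ?thesis by simp
qed

lemma scattered_add_monomial_iff:
  fixes S :: "'a::field \<Rightarrow> 'a"
  shows "scattered q t (\<lambda>x. c * x ^ (q ^ t) + S x) \<longleftrightarrow> scattered q t S"
  unfolding scattered_def
proof (intro iff_allI imp_cong refl)
  fix y z :: 'a assume "y \<noteq> 0" "z \<noteq> 0"
  thus "((c * y ^ q ^ t + S y) / y ^ q ^ t = (c * z ^ q ^ t + S z) / z ^ q ^ t)
      = (S y / y ^ q ^ t = S z / z ^ q ^ t)"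
    by (simp add: add_divide_distrib)
qed

lemma scattered_iff_scattered_Frobenius_root:
  fixes S T :: "'a::field \<Rightarrow> 'a"
  assumes "prime CHAR('a)" "q ^ t = CHAR('a) ^ e" "\<And>x. S x = T x ^ (q ^ t)"
  shows "scattered q t S \<longleftrightarrow> scattered q 0 T"
  unfolding scattered_def
proof (intro iff_allI imp_cong refl)
  fix y z :: 'a
  have "S y / y ^ q ^ t = (T y / y) ^ q ^ t" "S z / z ^ q ^ t = (T z / z) ^ q ^ t"
    by (simp_all add: assms(3) power_divide)
  thus "(S y / y ^ q ^ t = S z / z ^ q ^ t) = (T y / y ^ q ^ 0 = T z / z ^ q ^ 0)"
    using power_CHAR_power_eq_iff[OF assms(1,2)] by simp
qed

lemma linearized_sum_power_CHAR_power:
  fixes a :: "nat \<Rightarrow> 'a::field"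
  assumes "prime CHAR('a)" "q ^ t = CHAR('a) ^ e"
    and "\<And>i. i \<in> I \<Longrightarrow> a i ^ q ^ t = a i" "\<And>i. i \<in> I \<Longrightarrow> t \<le> s i"
  shows "(\<Sum>i\<in>I. a i * x ^ q ^ (s i - t)) ^ q ^ t = (\<Sum>i\<in>I. a i * x ^ q ^ s i)"
proof -
  have "(\<Sum>i\<in>I. a i * x ^ q ^ (s i - t)) ^ q ^ t = (\<Sum>i\<in>I. (a i * x ^ q ^ (s i - t)) ^ q ^ t)"
    by (rule freshmans_dream_sum'[OF assms(1,2)])
  also have "\<dots> = (\<Sum>i\<in>I. a i * x ^ q ^ s i)"
  proof (rule sum.cong[OF refl])
    fix i assume "i \<in> I"
    hence "q ^ (s i - t) * q ^ t = q ^ s i" using assms(4) by (simp flip: power_add)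
    thus "(a i * x ^ q ^ (s i - t)) ^ q ^ t = a i * x ^ q ^ s i"
      using assms(3)[OF \<open>i \<in> I\<close>] by (simp add: power_mult_distrib flip: power_mult)
  qed
  finally show ?thesis .
qed

theorem mainTheorem5:
  fixes p m n k :: nat and r :: "nat \<Rightarrow> nat" and a :: "nat \<Rightarrow> 'a::{finite,field}"
  assumes "prime p" and "odd p" and "m \<ge> 1"
    and card: "card (UNIV :: 'a set) = (p ^ m) ^ n"
    and "k \<ge> 2"
    and "0 < r 1" and "strict_mono_on {1..k} r" and "r k < n"
    and "\<forall>i\<in>{1..k}. a i \<noteq> 0"
    and "\<forall>i\<in>{2..k}. mult_order (a i) dvd ((p ^ m) ^ r 1 - 1)"
  shows "(scattered (p ^ m) (r 1) (\<lambda>x. \<Sum>i=1..k. a i * x ^ ((p ^ m) ^ r i))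
            \<longleftrightarrow> scattered (p ^ m) (r 1) (\<lambda>x. \<Sum>i=2..k. a i * x ^ ((p ^ m) ^ r i)))
       \<and> (scattered (p ^ m) (r 1) (\<lambda>x. \<Sum>i=2..k. a i * x ^ ((p ^ m) ^ r i))
            \<longleftrightarrow> scattered (p ^ m) 0 (\<lambda>x. \<Sum>i=2..k. a i * x ^ ((p ^ m) ^ (r i - r 1))))"
proof -
  define Q where "Q = p ^ m"
  have r_less: "r 1 < r i" if "i \<in> {2..k}" for i
    using strict_mono_onD[OF assms(7)] that by auto
  have "r 1 < r k" using r_less assms(5) by simp
  hence "n \<ge> 1" using assms(8) by linarith
  hence char: "CHAR('a) = p"
    using CHAR_eq_of_card_eq_prime_power[of p "m * n"] assms(1,3) card by (simp add: power_mult)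
  hence prime_char: "prime CHAR('a)" using assms(1) by simp
  have Q_char: "Q ^ r 1 = CHAR('a) ^ (m * r 1)" unfolding Q_def char by (simp add: power_mult)
  have "Q ^ r 1 \<ge> 1" unfolding Q_char using prime_char by (simp add: Suc_leI prime_gt_0_nat)
  hence fixed: "a i ^ Q ^ r 1 = a i" if "i \<in> {2..k}" for i
    using power_eq_self_if_mult_order_dvd[of "a i"] assms(9,10) that unfolding Q_def by auto
  have "(\<Sum>i=2..k. a i * x ^ (Q ^ r i)) = (\<Sum>i=2..k. a i * x ^ (Q ^ (r i - r 1))) ^ Q ^ r 1"
    for x :: 'a
    using linearized_sum_power_CHAR_power[where I="{2..k}" and s=r, OF prime_char Q_char fixed] r_less
    by (simp add: less_imp_le)
  hence root: "scattered Q (r 1) (\<lambda>x. \<Sum>i=2..k. a i * x ^ (Q ^ r i))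
      \<longleftrightarrow> scattered Q 0 (\<lambda>x. \<Sum>i=2..k. a i * x ^ (Q ^ (r i - r 1)))"
    by (rule scattered_iff_scattered_Frobenius_root[OF prime_char Q_char])
  have "{1..k} = insert 1 {2..k}" using assms(5) by auto
  hence split: "(\<lambda>x. \<Sum>i=1..k. a i * x ^ (Q ^ r i))
      = (\<lambda>x. a 1 * x ^ Q ^ r 1 + (\<Sum>i=2..k. a i * x ^ (Q ^ r i)))" by simp
  show ?thesis unfolding Q_def[symmetric] split scattered_add_monomial_iff root by simp
qed

end
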